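(* Let $\mathcal B_{IPR}=\{B_1,\dots,B_m\}$ be the partition of the $n$ jobs returned by IPR with $\rho=4$. Then $b_{\max}\le\frac{2W}{\ell+1}$, where, for the final tentative assignment, $b_{\max}=\max_{B\in\mathcal B_{IPR},|B|\ge2}p(B)$, $\mathcal M_{\max}$ is the collection containing a bag of processing time $b_{\max}$, $W=\sum_{B\in\mathcal M_{\max}}p(B)$ and $\ell=|\mathcal M_{\max}|$.
   Context: Jobs $j\in[n]$ have processing times $p_j\ge0$; for a bag $B$, $p(B)=\sum_{j\in B}p_j$. There are $m$ machines with predicted speeds $\hat s_1\ge\dots\ge\hat s_m$; $opt(\mathbf p,\hat{\mathbf s})$ is the minimum makespan $\max_i(\text{load of } i)/\hat s_i$ of assigning jobs to machines with speeds $\hat{\mathbf s}$. Algorithm IPR. Input: $\hat{\mathbf s}$, $\mathbf p$, $\alpha\in(0,1)$, accuracy $\epsilon\in(0,1)$, $\rho\ge1$. (1) Compute a partition $B_1,\dots,B_m$ with $p(B_1)\ge\dots\ge p(B_m)$ such that putting $B_i$ on machine $i$ has makespan at most $(1+\epsilon)opt(\mathbf p,\hat{\mathbf s})$ under speeds $\hat{\mathbf s}$. (2) Set $\overline{OPT}_C=\max_i p(B_i)/\hat s_i$ and tentative assignment $\mathcal M_i=\{B_i\}$. (3) While $\max\{p(B): B\in\cup_i\mathcal M_i, |B|\ge2\}>\rho\min\{p(B):B\in\cup_i\mathcal M_i\}$: compute $\mathcal M'=$ LPT-Rebalance$(\mathcal M)$; if $\max_i\sum_{B\in\mathcal M'_i}p(B)/\hat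 s_i>(1+\alpha)\overline{OPT}_C$ return the current bags $\cup_i\mathcal M_i$; else $\mathcal M\leftarrow\mathcal M'$. (4) Return the bags $\cup_i\mathcal M_i$. LPT-Rebalance: let $B_{\min}$ be a bag of minimum $p(B)$ over all bags, $\mathcal M_{\min}$ its collection, $\mathcal M_{\max}$ a collection containing a bag of maximum $p(B)$ among bags with at least two jobs. Move $B_{\min}$ into $\mathcal M_{\max}$, let $\ell=|\mathcal M_{\max}|$, pool its jobs and redistribute them into $\ell$ new bags by LPT (jobs in non-increasing processing time, each into a currently least-loaded bag); these form the new $\mathcal M_{\max}$. *)

theory Defs
  imports Complex_Main "HOL-Library.FuncSet"
begin

(* Jobs are indices j < n, machines are indices i < m (0-based); bags are sets of jobs. *)

definition pb :: "(nat \<Rightarrow> real) \<Rightarrow> nat set \<Rightarrow> real" where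
  "pb p B = (\<Sum>j\<in>B. p j)"

definition asg_makespan :: "nat \<Rightarrow> nat \<Rightarrow> (nat \<Rightarrow> real) \<Rightarrow> (nat \<Rightarrow> real) \<Rightarrow> (nat \<Rightarrow> nat) \<Rightarrow> real" where
  "asg_makespan n m p s f = Max ((\<lambda>i. (\<Sum>j\<in>{j\<in>{..<n}. f j = i}. p j) / s i) ` {..<m})"

definition opt :: "nat \<Rightarrow> nat \<Rightarrow> (nat \<Rightarrow> real) \<Rightarrow> (nat \<Rightarrow> real) \<Rightarrow> real" where
  "opt n m p s = Min (asg_makespan n m p s ` ({..<n} \<rightarrow>\<^sub>E {..<m}))"

definition ipr_step1 :: "nat \<Rightarrow> nat \<Rightarrow> (nat \<Rightarrow> real) \<Rightarrow> (nat \<Rightarrow> real) \<Rightarrow> real \<Rightarrow> (nat \<Rightarrow> nat set) \<Rightarrow> bool" where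
  "ipr_step1 n m p s eps B \<longleftrightarrow>
     (\<forall>i<m. \<forall>i'<m. i \<noteq> i' \<longrightarrow> B i \<inter> B i' = {}) \<and>
     (\<Union>i<m. B i) = {..<n} \<and>
     (\<forall>i j. i \<le> j \<and> j < m \<longrightarrow> pb p (B j) \<le> pb p (B i)) \<and>
     Max ((\<lambda>i. pb p (B i) / s i) ` {..<m}) \<le> (1 + eps) * opt n m p s"

(* tentative assignments: machine i < m holds the collection (list of bags) M i *)
type_synonym tass = "nat \<Rightarrow> nat set list"

definition bags :: "nat \<Rightarrow> tass \<Rightarrow> nat set set" where
  "bags m M = (\<Union>i<m. set (M i))"

definition bmin :: "nat \<Rightarrow> (nat \<Rightarrow> real) \<Rightarrow> tass \<Rightarrow> real" where
  "bmin m p M = Min (pb p ` bags m M)"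

definition bmax :: "nat \<Rightarrow> (nat \<Rightarrow> real) \<Rightarrow> tass \<Rightarrow> real" where
  "bmax m p M = Max (pb p ` {B \<in> bags m M. 2 \<le> card B})"

definition tass_makespan :: "nat \<Rightarrow> (nat \<Rightarrow> real) \<Rightarrow> (nat \<Rightarrow> real) \<Rightarrow> tass \<Rightarrow> real" where
  "tass_makespan m p s M = Max ((\<lambda>i. sum_list (map (pb p) (M i)) / s i) ` {..<m})"

definition loop_cond :: "nat \<Rightarrow> (nat \<Rightarrow> real) \<Rightarrow> real \<Rightarrow> tass \<Rightarrow> bool" where
  "loop_cond m p rho M \<longleftrightarrow> (\<exists>B\<in>bags m M. 2 \<le> card B \<and> pb p B > rho * bmin m p M)"

inductive lpt_fill :: "(nat \<Rightarrow> real) \<Rightarrow> nat set list \<Rightarrow> nat list \<Rightarrow> nat set list \<Rightarrow> bool"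
  for p where
  lpt_nil: "lpt_fill p Bs [] Bs"
| lpt_cons: "\<lbrakk> k < length Bs; \<forall>k'<length Bs. pb p (Bs ! k) \<le> pb p (Bs ! k');
              lpt_fill p (Bs[k := insert j (Bs ! k)]) js Bs' \<rbrakk>
             \<Longrightarrow> lpt_fill p Bs (j # js) Bs'"

definition lpt :: "(nat \<Rightarrow> real) \<Rightarrow> nat set \<Rightarrow> nat \<Rightarrow> nat set list \<Rightarrow> bool" where
  "lpt p J l Bs \<longleftrightarrow> (\<exists>js. set js = J \<and> distinct js \<and> sorted_wrt (\<lambda>a b. p b \<le> p a) js \<and>
                           lpt_fill p (replicate l {}) js Bs)"

(* LPT-Rebalance (nondeterministic: all admissible choices of B_min, M_max and LPT ties) *)
definition lpt_rebalance :: "nat \<Rightarrow> (nat \<Rightarrow> real) \<Rightarrow> tass \<Rightarrow> tass \<Rightarrow> bool" where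
  "lpt_rebalance m p M M' \<longleftrightarrow>
     (\<exists>imin kmin imax kmax Bs.
        imin < m \<and> kmin < length (M imin) \<and> pb p (M imin ! kmin) = bmin m p M \<and>
        imax < m \<and> kmax < length (M imax) \<and> 2 \<le> card (M imax ! kmax) \<and>
        pb p (M imax ! kmax) = bmax m p M \<and>
        (let Bmin = M imin ! kmin;
             M1 = M(imin := take kmin (M imin) @ drop (Suc kmin) (M imin));
             C = M1 imax @ [Bmin]
         in lpt p (\<Union> (set C)) (length C) Bs \<and> M' = M1(imax := Bs)))"

inductive ipr_reach :: "nat \<Rightarrow> (nat \<Rightarrow> real) \<Rightarrow> (nat \<Rightarrow> real) \<Rightarrow> real \<Rightarrow> real \<Rightarrow> real \<Rightarrow> tass \<Rightarrow> tass \<Rightarrow> bool"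
  for m p s alpha rho OPTC M0 where
  reach_init: "ipr_reach m p s alpha rho OPTC M0 M0"
| reach_step: "\<lbrakk> ipr_reach m p s alpha rho OPTC M0 M; loop_cond m p rho M; lpt_rebalance m p M M';
                 tass_makespan m p s M' \<le> (1 + alpha) * OPTC \<rbrakk>
               \<Longrightarrow> ipr_reach m p s alpha rho OPTC M0 M'"

definition ipr_final :: "nat \<Rightarrow> (nat \<Rightarrow> real) \<Rightarrow> (nat \<Rightarrow> real) \<Rightarrow> real \<Rightarrow> real \<Rightarrow> (nat \<Rightarrow> nat set) \<Rightarrow> tass \<Rightarrow> bool" where
  "ipr_final m p s alpha rho B M \<longleftrightarrow>
     (let OPTC = Max ((\<lambda>i. pb p (B i) / s i) ` {..<m}) in
      ipr_reach m p s alpha rho OPTC (\<lambda>i. [B i]) M \<and>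
      (\<not> loop_cond m p rho M \<or>
       (\<exists>M'. lpt_rebalance m p M M' \<and> tass_makespan m p s M' > (1 + alpha) * OPTC)))"

end

theory Submission
  imports Defs
begin

(* Invariant: within each collection, a bag with at least two jobs weighs at most twice as much
   as any other bag of the same collection. It holds for the initial singleton collections and
   survives deleting a bag. It also survives LPT: a job j placed into a least loaded bag that
   is nonempty is no larger than any job x already there, so the new load is at most twice the
   old minimum, while all other loads only grow. Applied to M_max, the other l - 1 bags each
   weigh at least b_max / 2, hence W >= b_max + (l - 1) b_max / 2. *)

definition twice_balanced :: "(nat \<Rightarrow> real) \<Rightarrow> nat set list \<Rightarrow> bool" where
  "twice_balanced p Bs \<longleftrightarrow>
     (\<forall>a<length Bs. \<forall>b<length Bs. a \<noteq> b \<longrightarrow> 2 \<le> card (Bs ! a) \<longrightarrow>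
        pb p (Bs ! a) \<le> 2 * pb p (Bs ! b))"

definition ipr_invariant :: "nat \<Rightarrow> (nat \<Rightarrow> real) \<Rightarrow> tass \<Rightarrow> bool" where
  "ipr_invariant m p M \<longleftrightarrow>
     (\<forall>i<m. twice_balanced p (M i)) \<and> (\<forall>X\<in>bags m M. \<forall>x\<in>X. 0 \<le> p x)"

lemma twice_balanced_load_bound:
  assumes "twice_balanced p Bs" "a < length Bs" "2 \<le> card (Bs ! a)"
  shows "pb p (Bs ! a) \<le> 2 * sum_list (map (pb p) Bs) / (real (length Bs) + 1)"
proof -
  let ?L = "pb p (Bs ! a)" and ?A = "{..<length Bs} - {a}"
  have load_split: "sum_list (map (pb p) Bs) = ?L + (\<Sum>k\<in>?A. pb p (Bs ! k))"
    using assms(2) by (simp add: sum_list_sum_nth atLeast0LessThan sum.remove)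
  have "\<forall>k\<in>?A. ?L / 2 \<le> pb p (Bs ! k)"
    using assms unfolding twice_balanced_def by force
  then have "real (card ?A) * (?L / 2) \<le> (\<Sum>k\<in>?A. pb p (Bs ! k))"
    by (intro sum_bounded_below) auto
  moreover have "real (card ?A) = real (length Bs) - 1"
    using assms(2) by simp
  ultimately have "(real (length Bs) + 1) * ?L \<le> 2 * sum_list (map (pb p) Bs)"
    unfolding load_split by (simp add: algebra_simps)
  then show ?thesis
    by (simp add: field_simps)
qed

lemma twice_balanced_remove_nth:
  assumes "twice_balanced p Bs" "k < length Bs"
  shows "twice_balanced p (take k Bs @ drop (Suc k) Bs)"
  unfolding twice_balanced_def
proof (intro allI impI)
  let ?Cs = "take k Bs @ drop (Suc k) Bs" and ?idx = "\<lambda>a. if a < k then a else Suc a"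
  have nth_Cs: "?Cs ! a = Bs ! ?idx a" if "a < length ?Cs" for a
    using that assms(2) by (auto simp: nth_append min_def)
  fix a b
  assume "a < length ?Cs" "b < length ?Cs" "a \<noteq> b" "2 \<le> card (?Cs ! a)"
  moreover have "?idx a \<noteq> ?idx b" "?idx a < length Bs" "?idx b < length Bs"
    using calculation assms(2) by auto
  ultimately show "pb p (?Cs ! a) \<le> 2 * pb p (?Cs ! b)"
    using assms(1) unfolding twice_balanced_def by (simp add: nth_Cs)
qed

lemma Union_set_update_insert:
  assumes "k < length Bs"
  shows "\<Union> (set (Bs[k := insert j (Bs ! k)])) = insert j (\<Union> (set Bs))"
proof -
  have "Bs = take k Bs @ Bs ! k # drop (Suc k) Bs"
    using assms by (rule id_take_nth_drop)
  then have "\<Union> (set Bs) = \<Union> (set (take k Bs)) \<union> Bs ! k \<union> \<Union> (set (drop (Suc k) Bs))"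
    by (metis Sup_insert Un_assoc Un_commute Union_Un_distrib list.simps(15) set_append)
  then show ?thesis
    using assms by (auto simp: upd_conv_take_nth_drop)
qed

lemma lpt_fill_Union:
  assumes "lpt_fill p Bs js Bs'"
  shows "\<Union> (set Bs') = \<Union> (set Bs) \<union> set js"
  using assms by induction (auto simp: Union_set_update_insert)

lemma twice_balanced_insert_least_loaded:
  assumes "twice_balanced p Bs" "k < length Bs"
    and least: "\<forall>k'<length Bs. pb p (Bs ! k) \<le> pb p (Bs ! k')"
    and "finite (Bs ! k)" "j \<notin> Bs ! k" "0 \<le> p j"
    and below: "\<forall>x\<in>Bs ! k. 0 \<le> p x \<and> p j \<le> p x"
  shows "twice_balanced p (Bs[k := insert j (Bs ! k)])"
  unfolding twice_balanced_def
proof (intro allI impI)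
  let ?N = "Bs[k := insert j (Bs ! k)]"
  have load_insert: "pb p (insert j (Bs ! k)) = p j + pb p (Bs ! k)"
    unfolding pb_def using assms(4,5) by simp
  have grows: "pb p (Bs ! b) \<le> pb p (?N ! b)" if "b < length Bs" for b
    using that load_insert \<open>0 \<le> p j\<close> by (cases "b = k") auto
  fix a b
  assume a: "a < length ?N" and b: "b < length ?N" and "a \<noteq> b" and card: "2 \<le> card (?N ! a)"
  show "pb p (?N ! a) \<le> 2 * pb p (?N ! b)"
  proof (cases "a = k")
    case True
    then have "Bs ! k \<noteq> {}"
      using card a by auto
    then obtain x where x: "x \<in> Bs ! k"
      by auto
    have "p j \<le> pb p (Bs ! k)"
      using below x member_le_sum[OF x _ assms(4), of p] unfolding pb_def by force
    moreover have "pb p (Bs ! k) \<le> pb p (?N ! b)"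
      using least b \<open>a \<noteq> b\<close> True by simp
    ultimately show ?thesis
      using True a load_insert least b by simp
  next
    case False
    then have "pb p (?N ! a) \<le> 2 * pb p (Bs ! b)"
      using assms(1) a b \<open>a \<noteq> b\<close> card unfolding twice_balanced_def by simp
    then show ?thesis
      using grows b by force
  qed
qed

lemma lpt_fill_twice_balanced:
  assumes "lpt_fill p Bs js Bs'"
    and "twice_balanced p Bs"
    and "sorted_wrt (\<lambda>a b. p b \<le> p a) js" "distinct js" "\<forall>y\<in>set js. 0 \<le> p y"
    and "\<forall>X\<in>set Bs. finite X \<and> X \<inter> set js = {} \<and> (\<forall>x\<in>X. 0 \<le> p x \<and> (\<forall>y\<in>set js. p y \<le> p x))"
  shows "twice_balanced p Bs'"
  using assms
proof induction
  case (lpt_nil Bs)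
  then show ?case by simp
next
  case (lpt_cons k Bs j js Bs')
  let ?N = "Bs[k := insert j (Bs ! k)]"
  have Bk: "Bs ! k \<in> set Bs"
    using lpt_cons.hyps(1) by simp
  have "finite (Bs ! k)" "j \<notin> Bs ! k" "0 \<le> p j" "\<forall>x\<in>Bs ! k. 0 \<le> p x \<and> p j \<le> p x"
    using lpt_cons.prems(4,5) Bk by auto
  then have "twice_balanced p ?N"
    using twice_balanced_insert_least_loaded lpt_cons.prems(1) lpt_cons.hyps(1,2) by blast
  moreover have "finite X \<and> X \<inter> set js = {} \<and> (\<forall>x\<in>X. 0 \<le> p x \<and> (\<forall>y\<in>set js. p y \<le> p x))"
    if "X \<in> set ?N" for X
  proof -
    have "X = insert j (Bs ! k) \<or> X \<in> set Bs"
      using that set_update_subset_insert[of Bs k "insert j (Bs ! k)"] by blast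
    then show ?thesis
      using lpt_cons.prems(2-5) Bk by auto
  qed
  ultimately show ?case
    using lpt_cons.IH lpt_cons.prems(2-4) by simp
qed

lemma lpt_twice_balanced:
  assumes "lpt p J l Bs" "\<forall>x\<in>J. 0 \<le> p x"
  shows "twice_balanced p Bs"
proof -
  obtain js where "set js = J" "distinct js" "sorted_wrt (\<lambda>a b. p b \<le> p a) js"
    and fill: "lpt_fill p (replicate l {}) js Bs"
    using assms(1) unfolding lpt_def by blast
  moreover have "twice_balanced p (replicate l {})"
    unfolding twice_balanced_def by simp
  ultimately show ?thesis
    using assms(2) by (intro lpt_fill_twice_balanced[OF fill]) auto
qed

lemma lpt_Union:
  assumes "lpt p J l Bs"
  shows "\<Union> (set Bs) = J"
  using assms lpt_fill_Union unfolding lpt_def by fastforce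

lemma ipr_invariant_lpt_rebalance:
  assumes "ipr_invariant m p M" "lpt_rebalance m p M M'"
  shows "ipr_invariant m p M'"
proof -
  obtain imin kmin imax Bs where
    "imin < m" "kmin < length (M imin)" "imax < m"
    and rebalance: "let Bmin = M imin ! kmin;
             M1 = M(imin := take kmin (M imin) @ drop (Suc kmin) (M imin));
             C = M1 imax @ [Bmin]
         in lpt p (\<Union> (set C)) (length C) Bs \<and> M' = M1(imax := Bs)"
    using assms(2) unfolding lpt_rebalance_def by blast
  define M1 where "M1 = M(imin := take kmin (M imin) @ drop (Suc kmin) (M imin))"
  define C where "C = M1 imax @ [M imin ! kmin]"
  have lpt_C: "lpt p (\<Union> (set C)) (length C) Bs" and M': "M' = M1(imax := Bs)"
    using rebalance unfolding Let_def M1_def C_def by auto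
  have M1: "twice_balanced p (M1 i) \<and> set (M1 i) \<subseteq> set (M i)" if "i < m" for i
    using assms(1) that \<open>kmin < length (M imin)\<close> twice_balanced_remove_nth
      set_take_subset[of kmin "M imin"] set_drop_subset[of "Suc kmin" "M imin"]
    unfolding ipr_invariant_def M1_def by auto
  have "M imin ! kmin \<in> bags m M"
    using \<open>imin < m\<close> \<open>kmin < length (M imin)\<close> unfolding bags_def by (auto intro: nth_mem)
  then have "set C \<subseteq> bags m M"
    using M1 \<open>imax < m\<close> unfolding C_def bags_def by auto
  then have nonneg_C: "\<forall>x\<in>\<Union> (set C). 0 \<le> p x"
    using assms(1) unfolding ipr_invariant_def by blast
  have "twice_balanced p Bs"
    using lpt_twice_balanced[OF lpt_C nonneg_C] .
  then have "twice_balanced p (M' i)" if "i < m" for i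
    using M1 that unfolding M' by simp
  moreover have "bags m M' \<subseteq> bags m M \<union> set Bs"
    using M1 unfolding bags_def M' by (fastforce split: if_splits)
  moreover have "\<forall>x\<in>\<Union> (set Bs). 0 \<le> p x"
    using nonneg_C lpt_Union[OF lpt_C] by simp
  ultimately show ?thesis
    using assms(1) unfolding ipr_invariant_def by blast
qed

lemma ipr_reach_invariant:
  assumes "ipr_reach m p s alpha rho OPTC M0 M" "ipr_invariant m p M0"
  shows "ipr_invariant m p M"
  using assms by induction (auto intro: ipr_invariant_lpt_rebalance)

theorem lemma7:
  fixes n m :: nat and p s :: "nat \<Rightarrow> real" and alpha eps :: real
    and B :: "nat \<Rightarrow> nat set" and M :: tass and i :: nat and Bx :: "nat set"
  assumes "1 \<le> m"
    and "\<forall>j<n. 0 \<le> p j"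
    and "\<forall>i<m. 0 < s i"
    and "\<forall>i j. i \<le> j \<and> j < m \<longrightarrow> s j \<le> s i"
    and "0 < alpha" and "alpha < 1" and "0 < eps" and "eps < 1"
    and "ipr_step1 n m p s eps B"
    and "ipr_final m p s alpha 4 B M"
    and "i < m" and "Bx \<in> set (M i)" and "2 \<le> card Bx"
    and "pb p Bx = bmax m p M"
  shows "bmax m p M \<le> 2 * sum_list (map (pb p) (M i)) / (real (length (M i)) + 1)"
proof -
  have "(\<Union>i<m. B i) = {..<n}"
    using assms(9) unfolding ipr_step1_def by blast
  then have "\<forall>X\<in>bags m (\<lambda>i. [B i]). \<forall>x\<in>X. 0 \<le> p x"
    using assms(2) unfolding bags_def by auto
  then have init: "ipr_invariant m p (\<lambda>i. [B i])"
    unfolding ipr_invariant_def twice_balanced_def by simp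
  have "ipr_reach m p s alpha 4 (Max ((\<lambda>i. pb p (B i) / s i) ` {..<m})) (\<lambda>i. [B i]) M"
    using assms(10) unfolding ipr_final_def Let_def by blast
  then have "ipr_invariant m p M"
    using init by (rule ipr_reach_invariant)
  then have balanced: "twice_balanced p (M i)"
    using assms(11) unfolding ipr_invariant_def by blast
  obtain a where "a < length (M i)" "M i ! a = Bx"
    using assms(12) by (auto simp: in_set_conv_nth)
  then show ?thesis
    using twice_balanced_load_bound[OF balanced] assms(13,14) by metis
qed

end
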